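(* Let $q$ be a positive integer and let $\mathcal{T}_q=(\tau_1,\ldots,\tau_q)$ be the permutation ideal. Identify each vertex $\ell_{i,j}$ ($1\le i\le j\le q$) of $\mathbb{M}_q^2$ with the monomial $\tau_i\tau_j$. Then the Scarf complex of $\mathcal{T}_q^{\,2}$ coincides with $\mathbb{M}_q^2$, i.e. $\operatorname{Scarf}(\mathcal{T}_q^{\,2})=\mathbb{M}_q^2$.
   Context: Permutation ideal: let $S_q$ be the symmetric group on $[q]=\{1,\ldots,q\}$; for $\sigma\in S_q$ written in one-line notation $\sigma=i_1i_2\cdots i_q$, $\sigma(j)=i_j$. Let $K$ be a field and $S_{\mathcal{T}}=K[x_\sigma:\sigma\in S_q]$ (one variable per permutation). For $i\in[q]$ put $\tau_i=\prod_{\sigma\in S_q}x_\sigma^{\sigma(i)}$, and $\mathcal{T}_q=(\tau_1,\ldots,\tau_q)$. The monomials $\tau_i\tau_j$, $1\le i\le j\le q$, are pairwise distinct and form the minimal generating set of $\mathcal{T}_q^{\,2}$. $\mathbb{M}_q^2$: vertex set $\{\ell_{i,j}:1\le i\le j\le q\}$, $\mathcal{M}=\{\ell_{i,j}:i<j\}$, facets $\mathcal{M}_i=\mathcal{M}\cup\{\ell_{i,i}\}$, $i\in[q]$; $\mathbb{M}_q^2=\langle\mathcal{M}_1,\ldots,\mathcal{M}_q\rangle$ is the simplicial complex with these facets. Scarf complex: for a monomial ideal $J$ minimally generated by monomials $g_1,\ldots,g_r$, the Taylor complex $\operatorname{Taylor}(J)$ is the full simplex on vertices $g_1,\ldots,g_r$,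 each face $\gamma$ labeled by $m_\gamma=\operatorname{lcm}$ of its vertices. $\operatorname{Scarf}(J)=\{\gamma\in\operatorname{Taylor}(J): m_\gamma\ne m_{\gamma'}\text{ for all }\gamma'\in\operatorname{Taylor}(J),\ \gamma'\neq\gamma\}$. *)

theory Defs
  imports "HOL-Combinatorics.Permutations"
begin

text \<open>Permutations of [q] are functions nat => nat that permute {1..q} (identity outside).
  A monomial in the variables x_sigma (sigma in S_q) is represented by its exponent vector,
  a function from permutations to nat (zero outside S_q). The field K plays no role.\<close>

type_synonym monomial = "(nat \<Rightarrow> nat) \<Rightarrow> nat"

definition mono_mult :: "monomial \<Rightarrow> monomial \<Rightarrow> monomial" where
  "mono_mult m n = (\<lambda>\<sigma>. m \<sigma> + n \<sigma>)"

text \<open>tau_i = prod over sigma in S_q of x_sigma^(sigma(i)).\<close>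
definition tau :: "nat \<Rightarrow> nat \<Rightarrow> monomial" where
  "tau q i = (\<lambda>\<sigma>. if \<sigma> permutes {1..q} then \<sigma> i else 0)"

text \<open>lcm of a finite set of monomials (lcm of the empty set is the monomial 1).\<close>
definition mono_lcm :: "monomial set \<Rightarrow> monomial" where
  "mono_lcm F = (\<lambda>\<sigma>. Max (insert 0 ((\<lambda>m. m \<sigma>) ` F)))"

text \<open>Taylor complex on a generating set G: all subsets of G (faces labelled by lcm).\<close>
definition taylor :: "monomial set \<Rightarrow> monomial set set" where
  "taylor G = Pow G"

definition scarf :: "monomial set \<Rightarrow> monomial set set" where
  "scarf G = {\<gamma> \<in> taylor G. \<forall>\<gamma>' \<in> taylor G. \<gamma>' \<noteq> \<gamma> \<longrightarrow> mono_lcm \<gamma>' \<noteq> mono_lcm \<gamma>}"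

definition ell :: "nat \<Rightarrow> nat \<times> nat \<Rightarrow> monomial" where
  "ell q p = mono_mult (tau q (fst p)) (tau q (snd p))"

definition Tq2_gens :: "nat \<Rightarrow> monomial set" where
  "Tq2_gens q = ell q ` {(i, j). 1 \<le> i \<and> i \<le> j \<and> j \<le> q}"

text \<open>The complex M_q^2 on vertices l_{i,j} (encoded as pairs (i,j)).\<close>
definition M_off :: "nat \<Rightarrow> (nat \<times> nat) set" where
  "M_off q = {(i, j). 1 \<le> i \<and> i < j \<and> j \<le> q}"

definition M_facet :: "nat \<Rightarrow> nat \<Rightarrow> (nat \<times> nat) set" where
  "M_facet q i = insert (i, i) (M_off q)"

definition M_complex :: "nat \<Rightarrow> (nat \<times> nat) set set" where
  "M_complex q = {F. \<exists>i \<in> {1..q}. F \<subseteq> M_facet q i}"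

end

theory Submission
  imports Defs
begin

text \<open>A face F of the Taylor complex of G is Scarf iff no generator g divides lcm (F - {g}).
  The exponent of x_sigma in tau_i tau_j is sigma(i) + sigma(j). Given a facet M_c of M_q^2 and a
  vertex l_{i,j}, a permutation with sigma(i) = q (if i = j), resp. with {sigma(i), sigma(j)} =
  {q - 1, q} and sigma(c) < q (if i < j), makes this exponent strictly larger than on every other
  vertex of M_c, so no face of M_q^2 violates the criterion. Conversely tau_a tau_b divides
  lcm (tau_a^2, tau_b^2), so a Scarf face has at most one diagonal vertex l_{a,a} and hence lies
  in a facet of M_q^2.\<close>

definition mono_dvd :: "monomial \<Rightarrow> monomial \<Rightarrow> bool" where
  "mono_dvd m n \<longleftrightarrow> (\<forall>\<sigma>. m \<sigma> \<le> n \<sigma>)"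

lemma mono_dvd_trans: "mono_dvd l m \<Longrightarrow> mono_dvd m n \<Longrightarrow> mono_dvd l n"
  unfolding mono_dvd_def using order_trans by blast

lemma mono_lcm_apply_le_iff:
  "finite F \<Longrightarrow> mono_lcm F \<sigma> \<le> k \<longleftrightarrow> (\<forall>n\<in>F. n \<sigma> \<le> k)"
  unfolding mono_lcm_def by simp

lemma mono_dvd_lcm: "finite F \<Longrightarrow> m \<in> F \<Longrightarrow> mono_dvd m (mono_lcm F)"
  unfolding mono_dvd_def mono_lcm_def by simp

lemma mono_dvd_lcmI:
  assumes "finite F" and "\<And>\<sigma>. \<exists>n\<in>F. m \<sigma> \<le> n \<sigma>"
  shows "mono_dvd m (mono_lcm F)"
proof (unfold mono_dvd_def, rule allI)
  fix \<sigma>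
  obtain n where n: "n \<in> F" "m \<sigma> \<le> n \<sigma>" using assms(2) by blast
  have "n \<sigma> \<le> mono_lcm F \<sigma>" using mono_dvd_lcm[OF assms(1) n(1)] by (simp add: mono_dvd_def)
  with n(2) show "m \<sigma> \<le> mono_lcm F \<sigma>" by (rule order_trans)
qed

lemma mono_lcm_dvd_lcm_mono:
  assumes "finite B" and "A \<subseteq> B"
  shows "mono_dvd (mono_lcm A) (mono_lcm B)"
proof -
  have "finite A" using assms by (rule finite_subset[rotated])
  then show ?thesis
    using assms mono_dvd_lcm[OF assms(1)] by (auto simp: mono_dvd_def mono_lcm_apply_le_iff)
qed

lemma mono_lcm_insert: "finite F \<Longrightarrow> mono_lcm (insert m F) \<sigma> = max (m \<sigma>) (mono_lcm F \<sigma>)"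
  unfolding mono_lcm_def by (subst image_insert, subst insert_commute, subst Max_insert) auto

lemma mono_lcm_insert_dvd:
  "finite F \<Longrightarrow> mono_dvd m (mono_lcm F) \<Longrightarrow> mono_lcm (insert m F) = mono_lcm F"
  unfolding mono_dvd_def by (auto simp: mono_lcm_insert max_absorb2)

lemma not_mono_dvd_lcmI:
  assumes "finite F" and "0 < m \<sigma>" and "\<forall>n\<in>F. n \<sigma> < m \<sigma>"
  shows "\<not> mono_dvd m (mono_lcm F)"
  using assms unfolding mono_dvd_def mono_lcm_def by (auto simp: not_le)

lemma scarf_iff:
  assumes "finite G"
  shows "F \<in> scarf G \<longleftrightarrow> F \<subseteq> G \<and> (\<forall>g\<in>G. \<not> mono_dvd g (mono_lcm (F - {g})))"
proof
  assume "F \<in> scarf G"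
  then have sub: "F \<subseteq> G"
    and unique: "\<And>F'. F' \<subseteq> G \<Longrightarrow> F' \<noteq> F \<Longrightarrow> mono_lcm F' \<noteq> mono_lcm F"
    unfolding scarf_def taylor_def by auto
  have finF: "finite F" using sub assms by (rule finite_subset)
  have "\<not> mono_dvd g (mono_lcm (F - {g}))" if g: "g \<in> G" for g
  proof
    assume "mono_dvd g (mono_lcm (F - {g}))"
    then have lcm_eq: "mono_lcm (insert g (F - {g})) = mono_lcm (F - {g})"
      using finF by (intro mono_lcm_insert_dvd) auto
    show False
    proof (cases "g \<in> F")
      case True
      then have "insert g (F - {g}) = F" by blast
      then show False using unique[of "F - {g}"] lcm_eq sub True by auto
    next
      case False
      then have "F - {g} = F" by simp
      then show False using unique[of "insert g F"] lcm_eq sub g False by auto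
    qed
  qed
  with sub show "F \<subseteq> G \<and> (\<forall>g\<in>G. \<not> mono_dvd g (mono_lcm (F - {g})))" by blast
next
  assume F: "F \<subseteq> G \<and> (\<forall>g\<in>G. \<not> mono_dvd g (mono_lcm (F - {g})))"
  then have finF: "finite F" using assms finite_subset by blast
  have "mono_lcm F' \<noteq> mono_lcm F" if F': "F' \<subseteq> G" "F' \<noteq> F" for F'
  proof
    assume eq: "mono_lcm F' = mono_lcm F"
    show False
    proof (cases "F' \<subseteq> F")
      case True
      then obtain g where g: "g \<in> F" "g \<notin> F'" using F' by blast
      then have "mono_dvd g (mono_lcm F')" using eq mono_dvd_lcm[OF finF] by simp
      moreover have "mono_dvd (mono_lcm F') (mono_lcm (F - {g}))"
        using True g finF by (intro mono_lcm_dvd_lcm_mono) auto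
      ultimately show False using F g mono_dvd_trans by blast
    next
      case False
      then obtain g where g: "g \<in> F'" "g \<notin> F" by blast
      have "finite F'" using F' assms finite_subset by blast
      then have "mono_dvd g (mono_lcm F)" using eq mono_dvd_lcm g by metis
      moreover have "\<not> mono_dvd g (mono_lcm (F - {g}))" using F F'(1) g(1) by blast
      moreover have "F - {g} = F" using g(2) by simp
      ultimately show False by simp
    qed
  qed
  with F show "F \<in> scarf G" unfolding scarf_def taylor_def by blast
qed

lemma exists_permutes_two_points:
  assumes "a \<in> S" "b \<in> S" "x \<in> S" "y \<in> S" "a \<noteq> b" "x \<noteq> y"
  shows "\<exists>\<sigma>. \<sigma> permutes S \<and> \<sigma> a = x \<and> \<sigma> b = y"
proof -
  define \<tau> where "\<tau> = transpose a x"
  have \<tau>: "\<tau> permutes S" unfolding \<tau>_def using assms by (simp add: permutes_swap_id)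
  have "\<tau> b \<noteq> x"
    using permutes_inj[OF \<tau>] \<open>a \<noteq> b\<close> unfolding \<tau>_def by (metis injD transpose_apply_first)
  moreover have "\<tau> b \<in> S" using \<tau> \<open>b \<in> S\<close> by (simp add: permutes_in_image)
  moreover have "\<tau> a = x" unfolding \<tau>_def by simp
  ultimately have "transpose (\<tau> b) y \<circ> \<tau> permutes S"
    and "(transpose (\<tau> b) y \<circ> \<tau>) a = x" and "(transpose (\<tau> b) y \<circ> \<tau>) b = y"
    using \<tau> \<open>y \<in> S\<close> \<open>x \<noteq> y\<close>
    by (simp_all add: permutes_compose permutes_swap_id transpose_apply_other \<tau>_def[symmetric])
  then show ?thesis by blast
qed

definition M_vertices :: "nat \<Rightarrow> (nat \<times> nat) set" where
  "M_vertices q = {(i, j). 1 \<le> i \<and> i \<le> j \<and> j \<le> q}"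

lemma finite_M_vertices: "finite (M_vertices q)"
  by (rule finite_subset[of _ "{1..q} \<times> {1..q}"]) (auto simp: M_vertices_def)

lemma M_facet_subset_M_vertices: "c \<in> {1..q} \<Longrightarrow> M_facet q c \<subseteq> M_vertices q"
  unfolding M_facet_def M_off_def M_vertices_def by auto

lemma Tq2_gens_eq: "Tq2_gens q = ell q ` M_vertices q"
  unfolding Tq2_gens_def M_vertices_def ..

lemma ell_permutes: "\<sigma> permutes {1..q} \<Longrightarrow> ell q (i, j) \<sigma> = \<sigma> i + \<sigma> j"
  unfolding ell_def mono_mult_def tau_def by simp

lemma permutes_atLeastAtMost_bounds:
  "\<sigma> permutes {1..q} \<Longrightarrow> i \<in> {1..q} \<Longrightarrow> 1 \<le> \<sigma> i \<and> \<sigma> i \<le> q"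
  using permutes_in_image by fastforce

lemma ell_diagonal_strict_max:
  assumes "a \<in> {1..q}"
  shows "\<exists>\<sigma>. \<sigma> permutes {1..q} \<and> (\<forall>p \<in> M_vertices q - {(a, a)}. ell q p \<sigma> < ell q (a, a) \<sigma>)"
proof -
  have "q \<in> {1..q}" using assms by simp
  then obtain \<sigma> where \<sigma>: "\<sigma> permutes {1..q}" "\<sigma> a = q"
    using assms permutes_swap_id transpose_apply_first by metis
  have inj: "\<sigma> x = \<sigma> y \<Longrightarrow> x = y" for x y using permutes_inj[OF \<sigma>(1)] by (rule injD)
  have "ell q p \<sigma> < ell q (a, a) \<sigma>" if p: "p \<in> M_vertices q - {(a, a)}" for p
  proof -
    obtain i j where ij: "p = (i, j)" "i \<in> {1..q}" "j \<in> {1..q}" "i = j \<longrightarrow> i \<noteq> a"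
      using p unfolding M_vertices_def by (cases p) auto
    then have "\<sigma> i \<le> q" "\<sigma> j \<le> q" "\<sigma> i \<noteq> \<sigma> j \<or> \<sigma> i \<noteq> q"
      using permutes_atLeastAtMost_bounds[OF \<sigma>(1)] inj[of i j] inj[of i a] \<sigma>(2) by auto
    then show ?thesis using \<sigma> ij(1) by (cases "\<sigma> i = \<sigma> j") (simp_all add: ell_permutes)
  qed
  with \<sigma>(1) show ?thesis by blast
qed

lemma ell_off_diagonal_strict_max:
  assumes "(a, b) \<in> M_off q" and "c \<in> {1..q}"
  shows "\<exists>\<sigma>. \<sigma> permutes {1..q} \<and> (\<forall>p \<in> M_facet q c - {(a, b)}. ell q p \<sigma> < ell q (a, b) \<sigma>)"
proof -
  define u where "u = (if c = a then b else a)"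
  define v where "v = (if c = a then a else b)"
  have uv: "u \<in> {1..q}" "v \<in> {1..q}" "u \<noteq> v" "c \<noteq> u" "{u, v} = {a, b}"
    using assms unfolding u_def v_def M_off_def by auto
  then have "q - 1 \<in> {1..q}" "q \<noteq> q - 1" by auto
  then obtain \<sigma> where \<sigma>: "\<sigma> permutes {1..q}" "\<sigma> u = q" "\<sigma> v = q - 1"
    using exists_permutes_two_points[of u "{1..q}" v q "q - 1"] uv by auto
  have inj: "\<sigma> x = \<sigma> y \<Longrightarrow> x = y" for x y using permutes_inj[OF \<sigma>(1)] by (rule injD)
  have ab: "ell q (a, b) \<sigma> = 2 * q - 1"
    using \<sigma> uv by (cases "c = a") (auto simp: u_def v_def ell_permutes)
  have "ell q p \<sigma> < 2 * q - 1" if p: "p \<in> M_facet q c - {(a, b)}" for p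
  proof (cases "p = (c, c)")
    case True
    then show ?thesis
      using inj[of c u] \<sigma> permutes_atLeastAtMost_bounds[OF \<sigma>(1) \<open>c \<in> {1..q}\<close>] uv
      by (force simp: ell_permutes)
  next
    case False
    then obtain i j where ij: "p = (i, j)" "i < j" "i \<in> {1..q}" "j \<in> {1..q}" "(i, j) \<noteq> (a, b)"
      using p assms(1) unfolding M_facet_def M_off_def by auto
    have "\<sigma> i \<le> q" "\<sigma> j \<le> q" "\<sigma> i \<noteq> \<sigma> j"
      using ij permutes_atLeastAtMost_bounds[OF \<sigma>(1)] inj by auto
    moreover have "\<not> (\<sigma> i = q \<and> \<sigma> j = q - 1)" "\<not> (\<sigma> i = q - 1 \<and> \<sigma> j = q)"
      using ij uv assms(1) \<sigma> inj[of i u] inj[of j v] inj[of i v] inj[of j u]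
      unfolding M_off_def doubleton_eq_iff by auto
    ultimately show ?thesis using \<sigma>(1) ij(1) by (auto simp: ell_permutes)
  qed
  then have "\<forall>p \<in> M_facet q c - {(a, b)}. ell q p \<sigma> < ell q (a, b) \<sigma>" unfolding ab by blast
  with \<sigma>(1) show ?thesis by blast
qed

lemma ell_strict_max_on_facet:
  assumes "e \<in> M_vertices q" and "c \<in> {1..q}"
  shows "\<exists>\<sigma>. \<sigma> permutes {1..q} \<and> (\<forall>p \<in> M_facet q c - {e}. ell q p \<sigma> < ell q e \<sigma>)"
proof (cases "fst e = snd e")
  case True
  then obtain a where "e = (a, a)" "a \<in> {1..q}" using assms(1) unfolding M_vertices_def by auto
  then show ?thesis
    using ell_diagonal_strict_max M_facet_subset_M_vertices[OF assms(2)] by blast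
next
  case False
  then obtain a b where "e = (a, b)" "(a, b) \<in> M_off q"
    using assms(1) unfolding M_vertices_def M_off_def by auto
  then show ?thesis using ell_off_diagonal_strict_max assms(2) by blast
qed

lemma inj_on_ell: "inj_on (ell q) (M_vertices q)"
proof (rule inj_onI, rule ccontr)
  fix p e assume p: "p \<in> M_vertices q" and e: "e \<in> M_vertices q"
    and eq: "ell q p = ell q e" and "p \<noteq> e"
  have "fst p \<in> {1..q}" "p \<in> M_facet q (fst p)"
    using p unfolding M_vertices_def M_facet_def M_off_def by auto
  then obtain \<sigma> where "ell q p \<sigma> < ell q e \<sigma>"
    using ell_strict_max_on_facet[OF e] \<open>p \<noteq> e\<close> by blast
  with eq show False by simp
qed

lemma M_complex_no_dvd:
  assumes "A \<in> M_complex q" and "e \<in> M_vertices q"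
  shows "\<not> mono_dvd (ell q e) (mono_lcm (ell q ` (A - {e})))"
proof -
  obtain c where c: "c \<in> {1..q}" and A: "A \<subseteq> M_facet q c"
    using assms(1) unfolding M_complex_def by blast
  obtain \<sigma> where \<sigma>: "\<sigma> permutes {1..q}" and max: "\<forall>p \<in> M_facet q c - {e}. ell q p \<sigma> < ell q e \<sigma>"
    using ell_strict_max_on_facet[OF assms(2) c] by blast
  have "finite A" using A M_facet_subset_M_vertices[OF c] finite_M_vertices by (metis finite_subset)
  moreover have "0 < ell q e \<sigma>"
  proof -
    obtain i j where "e = (i, j)" "i \<in> {1..q}" using assms(2) unfolding M_vertices_def by auto
    then show ?thesis using permutes_atLeastAtMost_bounds[OF \<sigma>, of i] by (simp add: ell_permutes[OF \<sigma>])
  qed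
  moreover have "\<forall>n \<in> ell q ` (A - {e}). n \<sigma> < ell q e \<sigma>" using A max by blast
  ultimately show ?thesis by (intro not_mono_dvd_lcmI) auto
qed

lemma two_diagonal_vertices_dvd:
  assumes "(a, a) \<in> A" "(b, b) \<in> A" "a \<noteq> b" "A \<subseteq> M_vertices q"
  shows "\<exists>e \<in> M_vertices q. mono_dvd (ell q e) (mono_lcm (ell q ` (A - {e})))"
proof -
  define e where "e = (min a b, max a b)"
  have "e \<in> M_vertices q" using assms unfolding e_def M_vertices_def by auto
  have "finite A" using assms(4) finite_M_vertices by (rule finite_subset)
  moreover have "ell q e \<sigma> \<le> ell q (a, a) \<sigma> \<or> ell q e \<sigma> \<le> ell q (b, b) \<sigma>" for \<sigma>
    unfolding e_def ell_def mono_mult_def tau_def by (auto simp: min_def max_def)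
  moreover have "(a, a) \<in> A - {e}" "(b, b) \<in> A - {e}" using assms unfolding e_def by auto
  ultimately have "mono_dvd (ell q e) (mono_lcm (ell q ` (A - {e})))"
    by (intro mono_dvd_lcmI) blast+
  with \<open>e \<in> M_vertices q\<close> show ?thesis by blast
qed

lemma M_complexI:
  assumes "1 \<le> q" and "A \<subseteq> M_vertices q" and "\<And>a b. (a, a) \<in> A \<Longrightarrow> (b, b) \<in> A \<Longrightarrow> a = b"
  shows "A \<in> M_complex q"
proof -
  obtain c where c: "c \<in> {1..q}" and diag: "\<And>a. (a, a) \<in> A \<Longrightarrow> a = c"
  proof (cases "\<exists>c. (c, c) \<in> A")
    case True
    then obtain c where "(c, c) \<in> A" by blast
    then have "c \<in> {1..q}" using assms(2) unfolding M_vertices_def by auto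
    moreover have "\<And>a. (a, a) \<in> A \<Longrightarrow> a = c" using \<open>(c, c) \<in> A\<close> assms(3) by blast
    ultimately show thesis by (rule that)
  next
    case False
    show thesis by (rule that[of 1]) (use assms(1) False in auto)
  qed
  have "A \<subseteq> M_facet q c"
  proof
    fix p assume "p \<in> A"
    moreover obtain i j where p: "p = (i, j)" by (cases p)
    ultimately have "(i, j) \<in> M_vertices q" "i = j \<Longrightarrow> i = c"
      using assms(2) diag by auto
    then show "p \<in> M_facet q c" unfolding p M_vertices_def M_facet_def M_off_def by auto
  qed
  with c show ?thesis unfolding M_complex_def by blast
qed

lemma ell_image_in_scarf_iff:
  assumes "1 \<le> q" and "A \<subseteq> M_vertices q"
  shows "ell q ` A \<in> scarf (Tq2_gens q) \<longleftrightarrow> A \<in> M_complex q"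
proof -
  have diff: "ell q ` A - {ell q e} = ell q ` (A - {e})" if "e \<in> M_vertices q" for e
    using inj_on_image_set_diff[OF inj_on_ell, of A "{e}"] assms(2) that by auto
  have "ell q ` A \<in> scarf (Tq2_gens q) \<longleftrightarrow>
      (\<forall>g \<in> ell q ` M_vertices q. \<not> mono_dvd g (mono_lcm (ell q ` A - {g})))"
    using assms(2) by (simp add: scarf_iff Tq2_gens_eq finite_M_vertices image_mono)
  also have "\<dots> \<longleftrightarrow> (\<forall>e \<in> M_vertices q. \<not> mono_dvd (ell q e) (mono_lcm (ell q ` (A - {e}))))"
    using diff by simp
  also have "\<dots> \<longleftrightarrow> A \<in> M_complex q"
  proof
    assume no_dvd: "\<forall>e \<in> M_vertices q. \<not> mono_dvd (ell q e) (mono_lcm (ell q ` (A - {e})))"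
    show "A \<in> M_complex q"
    proof (rule M_complexI[OF assms], rule ccontr)
      fix a b assume "(a, a) \<in> A" "(b, b) \<in> A" "a \<noteq> b"
      from two_diagonal_vertices_dvd[OF this assms(2)] no_dvd show False by blast
    qed
  qed (use M_complex_no_dvd in blast)
  finally show ?thesis .
qed

theorem theorem2:
  fixes q :: nat
  assumes "1 \<le> q"
  shows "scarf (Tq2_gens q) = (\<lambda>F. ell q ` F) ` M_complex q"
proof (intro set_eqI iffI)
  fix \<gamma> assume "\<gamma> \<in> scarf (Tq2_gens q)"
  moreover obtain A where "A \<subseteq> M_vertices q" "\<gamma> = ell q ` A"
    using calculation unfolding scarf_def taylor_def Tq2_gens_eq by (auto simp: subset_image_iff)
  ultimately show "\<gamma> \<in> (\<lambda>F. ell q ` F) ` M_complex q"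
    using ell_image_in_scarf_iff[OF assms] by blast
next
  fix \<gamma> assume "\<gamma> \<in> (\<lambda>F. ell q ` F) ` M_complex q"
  then obtain A where "A \<in> M_complex q" "\<gamma> = ell q ` A" by blast
  moreover have "A \<subseteq> M_vertices q"
    using \<open>A \<in> M_complex q\<close> M_facet_subset_M_vertices unfolding M_complex_def by blast
  ultimately show "\<gamma> \<in> scarf (Tq2_gens q)" using ell_image_in_scarf_iff[OF assms] by blast
qed

end
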